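(* For integers $n\ge 1$ and $i\ge 0$, let $S_n(i):=\sum_{j=0}^{n} \frac{q^{ij}(q;q)_{n+j}}{(q^2;q^2)_j}$ (and similarly $S_{n-1}(i)$). Then \[ S_n(i)=S_{n-1}(i)-q^n S_{n-1}(i+1)+q^{in}(q;q^2)_n . \]
   Context: For integers $m,i\ge0$, $S_m(i):=\sum_{j=0}^{m} \frac{q^{ij}(q;q)_{m+j}}{(q^2;q^2)_j}$, a rational function of $q$. Here $(a;q)_0:=1$ and $(a;q)_n:=(1-a)(1-aq)\cdots(1-aq^{n-1})$ for $n\ge1$. *)

theory Defs
  imports "HOL-Computational_Algebra.Polynomial" "HOL-Computational_Algebra.Fraction_Field"
begin

definition qpoch :: "'a::comm_ring_1 \<Rightarrow> 'a \<Rightarrow> nat \<Rightarrow> 'a" where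
  "qpoch a q n = (\<Prod>k<n. 1 - a * q ^ k)"

definition qvar :: "rat poly fract" where
  "qvar = Fract [:0, 1:] 1"

definition S :: "nat \<Rightarrow> nat \<Rightarrow> rat poly fract" where
  "S m i = (\<Sum>j=0..m. qvar ^ (i * j) * qpoch qvar qvar (m + j) / qpoch (qvar^2) (qvar^2) j)"

end

theory Submission
  imports Defs
begin

(* Since (q;q)_(m+j) (1 - q^(m+1) q^j) = (q;q)_(m+j+1), the combination
   S_m(i) - q^(m+1) S_m(i+1) telescopes termwise into the first m+1 terms of S_(m+1)(i).
   The remaining top term j = m+1 is q^(i(m+1)) (q;q^2)_(m+1), by splitting (q;q)_(2n)
   into its odd and even factors (q;q^2)_n (q^2;q^2)_n.  The identity holds over any field
   in which (q^2;q^2)_(m+1) does not vanish. *)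

definition qsum :: "'a::field \<Rightarrow> nat \<Rightarrow> nat \<Rightarrow> 'a" where
  "qsum q m i = (\<Sum>j=0..m. q ^ (i * j) * qpoch q q (m + j) / qpoch (q^2) (q^2) j)"

lemma S_eq_qsum: "S m i = qsum qvar m i"
  by (simp add: S_def qsum_def)

lemma qpoch_Suc: "qpoch a q (Suc n) = qpoch a q n * (1 - a * q ^ n)"
  by (simp add: qpoch_def)

lemma qpoch_eq_0_iff:
  fixes a q :: "'a::field"
  shows "qpoch a q n = 0 \<longleftrightarrow> (\<exists>k<n. a * q ^ k = 1)"
  by (auto simp: qpoch_def)

lemma qpoch_double: "qpoch q q (2 * n) = qpoch q (q^2) n * qpoch (q^2) (q^2) n"
proof (induction n)
  case 0
  then show ?case by (simp add: qpoch_def)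
next
  case (Suc n)
  have "qpoch q q (2 * Suc n) = qpoch q q (2 * n) * (1 - q * q ^ (2 * n)) * (1 - q * q ^ Suc (2 * n))"
    by (simp add: qpoch_Suc)
  also have "\<dots> = qpoch q (q^2) n * (1 - q * (q^2) ^ n) * (qpoch (q^2) (q^2) n * (1 - q^2 * (q^2) ^ n))"
    using Suc by (simp add: power_mult algebra_simps power2_eq_square)
  finally show ?case by (simp add: qpoch_Suc)
qed

lemma qsum_summand_telescope:
  fixes q d :: "'a::field"
  shows "q ^ (i * j) * qpoch q q (m + j) / d - q ^ Suc m * (q ^ ((i + 1) * j) * qpoch q q (m + j) / d)
       = q ^ (i * j) * qpoch q q (Suc m + j) / d"
  by (simp add: qpoch_Suc diff_divide_distrib[symmetric] power_add algebra_simps)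

lemma qsum_Suc:
  fixes q :: "'a::field"
  assumes "qpoch (q^2) (q^2) (Suc m) \<noteq> 0"
  shows "qsum q (Suc m) i = qsum q m i - q ^ Suc m * qsum q m (i + 1) + q ^ (i * Suc m) * qpoch q (q^2) (Suc m)"
proof -
  have head: "qsum q m i - q ^ Suc m * qsum q m (i + 1)
      = (\<Sum>j=0..m. q ^ (i * j) * qpoch q q (Suc m + j) / qpoch (q^2) (q^2) j)"
    unfolding qsum_def sum_distrib_left sum_subtractf[symmetric]
    by (rule sum.cong) (simp_all only: qsum_summand_telescope)
  have top: "q ^ (i * Suc m) * qpoch q q (Suc m + Suc m) / qpoch (q^2) (q^2) (Suc m)
      = q ^ (i * Suc m) * qpoch q (q^2) (Suc m)"
    using qpoch_double[of q "Suc m"] assms by (simp add: mult_2)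
  have "qsum q (Suc m) i = (\<Sum>j=0..m. q ^ (i * j) * qpoch q q (Suc m + j) / qpoch (q^2) (q^2) j)
      + q ^ (i * Suc m) * qpoch q q (Suc m + Suc m) / qpoch (q^2) (q^2) (Suc m)"
    by (simp add: qsum_def sum.atLeast0_atMost_Suc)
  then show ?thesis
    using head top by simp
qed

lemma qvar_power: "qvar ^ k = Fract ([:0, 1:] ^ k) 1"
  by (induction k) (simp_all add: qvar_def One_fract_def mult.commute)

lemma qvar_power_eq_1_iff: "qvar ^ k = 1 \<longleftrightarrow> k = 0"
proof
  assume "qvar ^ k = 1"
  then have "[:0, 1:] ^ k = (1 :: rat poly)"
    by (simp add: qvar_power One_fract_def eq_fract)
  then have "degree ([:0, 1 :: rat:] ^ k) = 0"
    by simp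
  then show "k = 0"
    by (simp add: degree_power_eq)
qed simp

lemma qpoch_qvar_squared_ne_0: "qpoch (qvar^2) (qvar^2) n \<noteq> 0"
proof -
  have "qvar^2 * (qvar^2) ^ k = qvar ^ (2 * Suc k)" for k
    by (simp only: power_Suc[symmetric] power_mult)
  then show ?thesis
    unfolding qpoch_eq_0_iff by (simp only: qvar_power_eq_1_iff) simp
qed

theorem lemma3p1:
  fixes n i :: nat
  assumes "n \<ge> 1"
  shows "S n i = S (n - 1) i - qvar ^ n * S (n - 1) (i + 1) + qvar ^ (i * n) * qpoch qvar (qvar^2) n"
proof -
  obtain m where "n = Suc m"
    using assms by (cases n) auto
  then show ?thesis
    using qsum_Suc[OF qpoch_qvar_squared_ne_0] by (simp add: S_eq_qsum)
qed

end
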